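(* If $C^1$ and $C^2$ are non-empty cliques of $G$, then $|C^1|<|C^2|$ if and only if $f(\mathbf{x}(C^1))<f(\mathbf{x}(C^2))$.
   Context: Let $G=(\mathcal{V},\mathcal{E})$ be a simple undirected graph on vertex set $\mathcal{V}=\{1,\dots,n\}$ with adjacency matrix $\mathbf{A}=(a_{ij})$ ($a_{ij}=1$ if $(i,j)\in\mathcal{E}$, else $0$; $a_{ii}=0$). A clique is a subset $C\subseteq\mathcal{V}$ with $(i,j)\in\mathcal{E}$ for all distinct $i,j\in C$. Let $\Delta=\{\mathbf{x}\in\mathbb{R}^n:\mathbf{0}\le\mathbf{x}\le\mathbf{1},\ \mathbf{1}^{\mathsf T}\mathbf{x}=1\}$. For a non-empty clique $C$, $\mathbf{x}(C)\in\Delta$ has $x(C)_i=1/|C|$ for $i\in C$ and $0$ otherwise. For $\mathbf{x}\in\Delta$, $\mathcal{P}(\mathbf{x})$ is the set of vectors in $\Delta$ obtained by permuting the coordinates of $\mathbf{x}$. Let $\Phi:X\to\mathbb{R}$ be twice continuously differentiable on an open set $X\supset\Delta$, satisfying for every $\mathbf{x}\in\Delta$: (C1) $\nabla^2\Phi(\mathbf{x})$ is positive semidefinite; (C2) $\|\nabla^2\Phi(\mathbf{x})\|_2<2$; (C3) $\Phi$ is constant on $\mathcal{P}(\mathbf{x})$. Define $f(\mathbf{x})=\mathbf{x}^{\mathsf T}\mathbf{A}\mathbf{x}+\Phi(\mathbf{x})$. *)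

theory Defs
  imports "HOL-Analysis.Analysis"
begin

text \<open>Vertex set {1..n} is rendered as a finite type 'n; vectors in R^n as real^'n.
  A simple undirected graph is a symmetric irreflexive relation E on 'n.\<close>

definition simple_graph :: "('n \<Rightarrow> 'n \<Rightarrow> bool) \<Rightarrow> bool" where
  "simple_graph E \<longleftrightarrow> (\<forall>i j. E i j \<longleftrightarrow> E j i) \<and> (\<forall>i. \<not> E i i)"

definition adj_matrix :: "('n::finite \<Rightarrow> 'n \<Rightarrow> bool) \<Rightarrow> real^'n^'n" where
  "adj_matrix E = (\<chi> i j. if E i j then 1 else 0)"

definition is_clique :: "('n \<Rightarrow> 'n \<Rightarrow> bool) \<Rightarrow> 'n set \<Rightarrow> bool" where
  "is_clique E C \<longleftrightarrow> (\<forall>i\<in>C. \<forall>j\<in>C. i \<noteq> j \<longrightarrow> E i j)"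

definition std_simplex :: "(real^'n::finite) set" where
  "std_simplex = {x. (\<forall>i. 0 \<le> x $ i \<and> x $ i \<le> 1) \<and> (\<Sum>i\<in>UNIV. x $ i) = 1}"

definition clique_vec :: "'n::finite set \<Rightarrow> real^'n" where
  "clique_vec C = (\<chi> i. if i \<in> C then 1 / real (card C) else 0)"

definition perm_set :: "real^'n::finite \<Rightarrow> (real^'n) set" where
  "perm_set x = {y \<in> std_simplex. \<exists>p. p permutes (UNIV::'n set) \<and> y = (\<chi> i. x $ p i)}"

definition f_obj :: "real^'n^'n \<Rightarrow> (real^'n \<Rightarrow> real) \<Rightarrow> real^'n::finite \<Rightarrow> real" where
  "f_obj A \<Phi> x = x \<bullet> (A *v x) + \<Phi> x"

end

theory Submission
  imports Defs
begin

text \<open>On a clique vector the quadratic part of \<open>f\<close> equals \<open>1 - 1/|C|\<close>, and by permutation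
  invariance \<open>\<Phi>(x(C))\<close> depends only on \<open>|C|\<close>. So it suffices to compare \<open>x(S)\<close> and \<open>x(T)\<close>
  for cliques \<open>S \<subset> T\<close>, where \<open>\<parallel>x(S) - x(T)\<parallel>\<^sup>2 = 1/|S| - 1/|T|\<close>. By symmetry the gradient of
  \<open>\<Phi>\<close> at \<open>x(T)\<close> is constant on \<open>T\<close>, hence orthogonal to \<open>x(S) - x(T)\<close>; and since the
  Hessian has norm below 2, Taylor's formula gives
  \<open>\<Phi>(x(S)) - \<Phi>(x(T)) < \<parallel>x(S) - x(T)\<parallel>\<^sup>2\<close>, which is exactly the gain of the quadratic part.\<close>

lemma strict_second_order_upper_bound:
  fixes \<phi> :: "'a::real_inner \<Rightarrow> real" and g :: "'a \<Rightarrow> 'a" and D :: "'a \<Rightarrow> 'a \<Rightarrow> 'a"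
  assumes S: "convex S" "y \<in> S" "z \<in> S" "z \<noteq> y"
    and deriv: "\<And>x. x \<in> S \<Longrightarrow> (\<phi> has_derivative (\<lambda>h. g x \<bullet> h)) (at x)"
    and deriv2: "\<And>x. x \<in> S \<Longrightarrow> (g has_derivative D x) (at x)"
    and bound: "\<And>x v. x \<in> S \<Longrightarrow> v \<noteq> 0 \<Longrightarrow> D x v \<bullet> v < c * (v \<bullet> v)"
  shows "\<phi> z < \<phi> y + g y \<bullet> (z - y) + c / 2 * ((z - y) \<bullet> (z - y))"
proof -
  define d where "d = z - y"
  have seg: "y + t *\<^sub>R d \<in> S" if "0 \<le> t" "t \<le> 1" for t
  proof -
    have "(1 - t) *\<^sub>R y + t *\<^sub>R z \<in> S" using S that by (simp add: convex_alt)
    then show ?thesis by (simp add: d_def algebra_simps)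
  qed
  have path: "((\<lambda>t. y + t *\<^sub>R d) has_derivative (\<lambda>h. h *\<^sub>R d)) (at t within T)" for t T
    by (auto intro!: derivative_eq_intros)
  define q where "q t = \<phi> (y + t *\<^sub>R d) - t * (g y \<bullet> d) - c / 2 * t\<^sup>2 * (d \<bullet> d)" for t
  define r where "r t = g (y + t *\<^sub>R d) \<bullet> d - g y \<bullet> d - c * t * (d \<bullet> d)" for t
  define r' where "r' t = D (y + t *\<^sub>R d) d \<bullet> d - c * (d \<bullet> d)" for t
  have q_deriv: "(q has_derivative (\<lambda>h. h * r t)) (at t within {0..1})" if "t \<in> {0..1}" for t
  proof -
    have "((\<lambda>t. \<phi> (y + t *\<^sub>R d)) has_derivative (\<lambda>h. g (y + t *\<^sub>R d) \<bullet> (h *\<^sub>R d)))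
        (at t within {0..1})"
      using has_derivative_compose[OF path deriv[OF seg]] that by auto
    then have "(q has_derivative (\<lambda>h. g (y + t *\<^sub>R d) \<bullet> (h *\<^sub>R d) - h * (g y \<bullet> d)
        - h * (c * t * (d \<bullet> d)))) (at t within {0..1})"
      unfolding q_def[abs_def] by (auto intro!: derivative_eq_intros simp: algebra_simps)
    then show ?thesis by (simp add: r_def algebra_simps)
  qed
  obtain s where s: "0 < s" "s < 1" "q 1 - q 0 = r s"
    using mvt_simple[of 0 1 q "\<lambda>t h. h * r t"] q_deriv by auto
  have r_deriv: "(r has_derivative (\<lambda>h. h * r' t)) (at t within {0..s})" if "t \<in> {0..s}" for t
  proof -
    have "((\<lambda>t. g (y + t *\<^sub>R d)) has_derivative (\<lambda>h. D (y + t *\<^sub>R d) (h *\<^sub>R d)))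
        (at t within {0..s})"
      using has_derivative_compose[OF path deriv2[OF seg]] that s by auto
    moreover have "linear (D (y + t *\<^sub>R d))"
      using deriv2[OF seg, of t] that s by (auto dest: has_derivative_linear)
    ultimately have "((\<lambda>t. g (y + t *\<^sub>R d) \<bullet> d) has_derivative (\<lambda>h. h * (D (y + t *\<^sub>R d) d \<bullet> d)))
        (at t within {0..s})"
      by (auto dest: has_derivative_inner_left simp: linear_scale)
    then have "(r has_derivative (\<lambda>h. h * (D (y + t *\<^sub>R d) d \<bullet> d) - 0 - h * (c * (d \<bullet> d))))
        (at t within {0..s})"
      unfolding r_def[abs_def] by (intro has_derivative_diff) (auto intro!: derivative_eq_intros)
    then show ?thesis by (simp add: r'_def algebra_simps)
  qed
  obtain u where u: "0 < u" "u < s" "r s - r 0 = s * r' u"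
    using mvt_simple[of 0 s r "\<lambda>t h. h * r' t"] r_deriv s by (auto simp: mult.commute)
  have "r' u < 0"
    using bound[OF seg, of u d] u s S(4) by (simp add: r'_def d_def)
  then have "r s < 0" using u s by (simp add: r_def mult_pos_neg)
  then have "q 1 < q 0" using s by simp
  then show ?thesis by (simp add: q_def d_def)
qed

lemma has_derivative_eq_zero_if_even:
  fixes \<phi> :: "'a::real_normed_vector \<Rightarrow> real"
  assumes deriv: "(\<phi> has_derivative \<phi>') (at y)" and "0 < \<delta>"
    and even: "\<And>t. \<bar>t\<bar> < \<delta> \<Longrightarrow> \<phi> (y + t *\<^sub>R w) = \<phi> (y - t *\<^sub>R w)"
  shows "\<phi>' w = 0"
proof -
  have lin: "linear \<phi>'" using deriv by (rule has_derivative_linear)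
  have "((\<lambda>t. y + t *\<^sub>R w) has_derivative (\<lambda>h. h *\<^sub>R w)) (at 0)"
    "((\<lambda>t. y - t *\<^sub>R w) has_derivative (\<lambda>h. - (h *\<^sub>R w))) (at 0)"
    by (auto intro!: derivative_eq_intros)
  moreover have "(\<phi> has_derivative \<phi>') (at (y + 0 *\<^sub>R w))" "(\<phi> has_derivative \<phi>') (at (y - 0 *\<^sub>R w))"
    using deriv by simp_all
  ultimately have plus: "((\<lambda>t. \<phi> (y + t *\<^sub>R w)) has_derivative (\<lambda>h. \<phi>' (h *\<^sub>R w))) (at 0)"
    and reflected: "((\<lambda>t. \<phi> (y - t *\<^sub>R w)) has_derivative (\<lambda>h. \<phi>' (- (h *\<^sub>R w)))) (at 0)"
    by (auto intro: has_derivative_compose)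
  have minus: "((\<lambda>t. \<phi> (y + t *\<^sub>R w)) has_derivative (\<lambda>h. \<phi>' (- (h *\<^sub>R w)))) (at 0)"
    by (rule has_derivative_transform_within_open[OF reflected, of "ball 0 \<delta>"])
      (use \<open>0 < \<delta>\<close> even in auto)
  have "(\<lambda>h. \<phi>' (h *\<^sub>R w)) = (\<lambda>h. \<phi>' (- (h *\<^sub>R w)))"
    using plus minus by (rule has_derivative_unique)
  then have "\<phi>' w = - \<phi>' w" using real_vector.linear_neg[OF lin] by (metis scaleR_one)
  then show ?thesis by simp
qed

lemma std_simplex_sum_two_le:
  assumes "x \<in> std_simplex" "i \<noteq> j"
  shows "x $ i + x $ j \<le> 1"
proof -
  have "(\<Sum>l\<in>{i, j}. x $ l) \<le> (\<Sum>l\<in>UNIV. x $ l)"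
    using assms(1) by (intro sum_mono2) (auto simp: std_simplex_def)
  then show ?thesis using assms by (simp add: std_simplex_def)
qed

lemma std_simplex_transfer_mem:
  assumes x: "x \<in> std_simplex" and "i \<noteq> j" and t: "- x $ i \<le> t" "t \<le> x $ j"
  shows "x + t *\<^sub>R (axis i 1 - axis j 1) \<in> std_simplex"
proof -
  have "x $ i + x $ j \<le> 1" using x \<open>i \<noteq> j\<close> by (rule std_simplex_sum_two_le)
  moreover have "(\<Sum>l\<in>UNIV. (axis i 1 - axis j 1) $ l) = (0::real)"
    by (simp add: axis_def sum_subtractf)
  ultimately show ?thesis
    using x t \<open>i \<noteq> j\<close> by (auto simp: std_simplex_def axis_def sum.distrib sum_distrib_left[symmetric])
qed

lemma perm_invariant_gradient_eq:
  fixes \<Phi> :: "real^'n::finite \<Rightarrow> real"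
  assumes inv: "\<And>x y. x \<in> std_simplex \<Longrightarrow> y \<in> perm_set x \<Longrightarrow> \<Phi> y = \<Phi> x"
    and deriv: "(\<Phi> has_derivative (\<lambda>h. g \<bullet> h)) (at x)"
    and x: "x \<in> std_simplex" "i \<noteq> j" "x $ i = x $ j" "0 < x $ i"
  shows "g $ i = g $ j"
proof -
  define w where "w = axis i 1 - axis j (1::real)"
  have mem: "x + t *\<^sub>R w \<in> std_simplex" if "\<bar>t\<bar> < x $ i" for t
    using std_simplex_transfer_mem[OF x(1,2)] that x(3) unfolding w_def by auto
  have even: "\<Phi> (x + t *\<^sub>R w) = \<Phi> (x - t *\<^sub>R w)" if t: "\<bar>t\<bar> < x $ i" for t
  proof -
    have "x - t *\<^sub>R w = (\<chi> l. (x + t *\<^sub>R w) $ Transposition.transpose i j l)"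
      using x(2,3) by (auto simp: vec_eq_iff w_def axis_def Transposition.transpose_def)
    moreover have "x + (- t) *\<^sub>R w \<in> std_simplex" using t by (intro mem) auto
    ultimately have "x - t *\<^sub>R w \<in> perm_set (x + t *\<^sub>R w)"
      unfolding perm_set_def using permutes_swap_id[of i UNIV j] by auto
    then show ?thesis using inv mem[OF t] by simp
  qed
  have "g \<bullet> w = 0" by (rule has_derivative_eq_zero_if_even[OF deriv x(4) even])
  then show ?thesis by (simp add: w_def inner_diff_right inner_axis)
qed

lemma convex_std_simplex: "convex (std_simplex :: (real^'n::finite) set)"
proof (rule convexI)
  fix x y :: "real^'n" and u v :: real
  assume xy: "x \<in> std_simplex" "y \<in> std_simplex" and uv: "0 \<le> u" "0 \<le> v" "u + v = 1"
  have "u * x $ i + v * y $ i \<le> u * 1 + v * 1" for i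
    using xy uv by (intro add_mono mult_left_mono) (auto simp: std_simplex_def)
  then show "u *\<^sub>R x + v *\<^sub>R y \<in> std_simplex"
    using xy uv by (auto simp: std_simplex_def sum.distrib sum_distrib_left[symmetric])
qed

lemma inner_matrix_vector_less_of_onorm_less:
  fixes M :: "real^'n::finite^'n"
  assumes "onorm (\<lambda>v. M *v v) < c" "v \<noteq> 0"
  shows "(M *v v) \<bullet> v < c * (v \<bullet> v)"
proof -
  have "(M *v v) \<bullet> v \<le> norm (M *v v) * norm v" by (rule norm_cauchy_schwarz)
  also have "\<dots> \<le> onorm (\<lambda>v. M *v v) * norm v * norm v"
    by (intro mult_right_mono onorm matrix_vector_mul_bounded_linear) auto
  also have "\<dots> < c * norm v * norm v"
    using assms by (intro mult_strict_right_mono) auto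
  finally show ?thesis by (simp add: dot_square_norm power2_eq_square mult.assoc)
qed

lemma inner_eq_zero_if_const_on_support:
  fixes g d :: "real^'n::finite"
  assumes "\<And>l. l \<in> T \<Longrightarrow> g $ l = c" "\<And>l. l \<notin> T \<Longrightarrow> d $ l = 0" "(\<Sum>l\<in>UNIV. d $ l) = 0"
  shows "g \<bullet> d = 0"
proof -
  have pointwise: "g $ l * d $ l = c * d $ l" for l
    using assms(1,2) by (cases "l \<in> T") auto
  have "g \<bullet> d = (\<Sum>l\<in>UNIV. c * d $ l)"
    unfolding inner_vec_def inner_real_def by (rule sum.cong[OF refl]) (rule pointwise)
  then show ?thesis by (simp add: sum_distrib_left[symmetric] assms(3))
qed

lemma clique_vec_nth: "clique_vec C $ i = (if i \<in> C then 1 / real (card C) else 0)"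
  by (simp add: clique_vec_def)

lemma sum_clique_vec: "(C::'n::finite set) \<noteq> {} \<Longrightarrow> (\<Sum>i\<in>UNIV. clique_vec C $ i) = 1"
  by (simp add: clique_vec_nth sum.If_cases)

lemma clique_vec_in_std_simplex:
  assumes "(C::'n::finite set) \<noteq> {}" shows "clique_vec C \<in> std_simplex"
proof -
  have "1 \<le> real (card C)" using assms by (simp add: Suc_le_eq card_gt_0_iff)
  then show ?thesis using sum_clique_vec[OF assms] by (simp add: std_simplex_def clique_vec_nth)
qed

lemma inner_clique_vec:
  "clique_vec S \<bullet> clique_vec (T::'n::finite set) = real (card (S \<inter> T)) / (real (card S) * real (card T))"
proof -
  have "clique_vec S \<bullet> clique_vec T = (\<Sum>i\<in>UNIV. if i \<in> S \<inter> T then 1 / (real (card S) * real (card T)) else 0)"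
    unfolding inner_vec_def by (intro sum.cong) (auto simp: clique_vec_nth)
  also have "\<dots> = (\<Sum>i\<in>S \<inter> T. 1 / (real (card S) * real (card T)))"
    using sum.inter_restrict[of UNIV "\<lambda>_. 1 / (real (card S) * real (card T))" "S \<inter> T"] by simp
  finally show ?thesis by simp
qed

lemma inner_clique_vec_diff:
  assumes "S \<subseteq> (T::'n::finite set)" "S \<noteq> {}"
  defines "d \<equiv> clique_vec S - clique_vec T"
  shows "d \<bullet> d = 1 / real (card S) - 1 / real (card T)"
proof -
  have "card S \<noteq> 0" "card T \<noteq> 0" using assms by (auto simp: card_eq_0_iff dest: finite_subset)
  moreover have "S \<inter> T = S" "T \<inter> S = S" using assms by auto
  ultimately show ?thesis
    by (simp add: d_def inner_diff inner_clique_vec field_simps)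
qed

lemma inner_adj_matrix_clique_vec:
  assumes "simple_graph E" "is_clique E C" "(C::'n::finite set) \<noteq> {}"
  shows "clique_vec C \<bullet> (adj_matrix E *v clique_vec C) = 1 - 1 / real (card C)"
proof -
  let ?k = "real (card C)"
  have k: "card C \<ge> 1" using assms(3) by (simp add: Suc_le_eq card_gt_0_iff)
  have row: "(adj_matrix E *v clique_vec C) $ i = (?k - 1) / ?k" if "i \<in> C" for i
  proof -
    have "(adj_matrix E *v clique_vec C) $ i = (\<Sum>j\<in>UNIV. if j \<in> C - {i} then 1 / ?k else 0)"
      unfolding matrix_vector_mult_def adj_matrix_def clique_vec_nth
      using assms(1,2) that by (auto simp: simple_graph_def is_clique_def intro!: sum.cong)
    also have "\<dots> = real (card (C - {i})) / ?k"
      using sum.inter_restrict[of UNIV "\<lambda>_. 1 / ?k" "C - {i}"] by simp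
    also have "\<dots> = (?k - 1) / ?k" using that k by (simp add: of_nat_diff)
    finally show ?thesis .
  qed
  have "clique_vec C \<bullet> (adj_matrix E *v clique_vec C)
      = (\<Sum>i\<in>UNIV. if i \<in> C then 1 / ?k * ((?k - 1) / ?k) else 0)"
    unfolding inner_vec_def by (intro sum.cong) (auto simp: clique_vec_nth row)
  also have "\<dots> = ?k * (1 / ?k * ((?k - 1) / ?k))" by (simp add: sum.If_cases)
  also have "\<dots> = 1 - 1 / ?k"
  proof -
    have "?k \<noteq> 0" using assms(3) by simp
    then show ?thesis by (simp add: field_simps)
  qed
  finally show ?thesis .
qed

lemma f_obj_clique_vec:
  assumes "simple_graph E" "is_clique E C" "C \<noteq> {}"
  shows "f_obj (adj_matrix E) \<Phi> (clique_vec C) = 1 - 1 / real (card C) + \<Phi> (clique_vec C)"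
  using inner_adj_matrix_clique_vec[OF assms] by (simp add: f_obj_def)

lemma clique_vec_permute:
  assumes "card (C::'n::finite set) = card D"
  obtains p where "p permutes UNIV" "clique_vec C = (\<chi> i. clique_vec D $ p i)"
proof -
  obtain f where f: "bij_betw f C D" using finite_same_card_bij[of C D] assms by auto
  have "card (- C) = card (- D)" using assms by (simp add: Compl_eq_Diff_UNIV card_Diff_subset)
  then obtain g where g: "bij_betw g (- C) (- D)" using finite_same_card_bij[of "- C" "- D"] by auto
  define p where "p i = (if i \<in> C then f i else g i)" for i
  have "bij_betw p C D" using f by (rule bij_betw_cong[THEN iffD1, rotated]) (simp add: p_def)
  moreover have "bij_betw p (- C) (- D)" using g by (rule bij_betw_cong[THEN iffD1, rotated]) (simp add: p_def)
  ultimately have "bij_betw p (C \<union> - C) (D \<union> - D)" by (rule bij_betw_combine) auto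
  then have "p permutes UNIV" by (intro bij_imp_permutes) auto
  moreover have "p i \<in> D \<longleftrightarrow> i \<in> C" for i
    using f g unfolding p_def bij_betw_def by auto
  ultimately show ?thesis using assms that by (auto simp: vec_eq_iff clique_vec_nth)
qed

lemma perm_invariant_clique_vec_eq:
  fixes \<Phi> :: "real^'n::finite \<Rightarrow> real"
  assumes inv: "\<And>x y. x \<in> std_simplex \<Longrightarrow> y \<in> perm_set x \<Longrightarrow> \<Phi> y = \<Phi> x"
    and "card C = card D" "C \<noteq> {}" "D \<noteq> {}"
  shows "\<Phi> (clique_vec C) = \<Phi> (clique_vec D)"
proof -
  obtain p where "p permutes UNIV" "clique_vec C = (\<chi> i. clique_vec D $ p i)"
    using clique_vec_permute[OF assms(2)] .
  then have "clique_vec C \<in> perm_set (clique_vec D)"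
    unfolding perm_set_def using clique_vec_in_std_simplex[OF assms(3)] by auto
  then show ?thesis using inv clique_vec_in_std_simplex[OF assms(4)] by blast
qed

lemma perm_invariant_clique_vec_subset_less:
  fixes \<Phi> :: "real^'n::finite \<Rightarrow> real" and grad :: "real^'n \<Rightarrow> real^'n"
    and H :: "real^'n \<Rightarrow> real^'n^'n"
  assumes grad: "\<And>x. x \<in> std_simplex \<Longrightarrow> (\<Phi> has_derivative (\<lambda>h. grad x \<bullet> h)) (at x)"
    and hess: "\<And>x. x \<in> std_simplex \<Longrightarrow> (grad has_derivative (\<lambda>h. H x *v h)) (at x)"
    and hess_bound: "\<And>x. x \<in> std_simplex \<Longrightarrow> onorm (\<lambda>v. H x *v v) < 2"
    and inv: "\<And>x y. x \<in> std_simplex \<Longrightarrow> y \<in> perm_set x \<Longrightarrow> \<Phi> y = \<Phi> x"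
    and ST: "S \<subset> T" "S \<noteq> {}"
  shows "\<Phi> (clique_vec S) < \<Phi> (clique_vec T) + (1 / real (card S) - 1 / real (card T))"
proof -
  define y where "y = clique_vec T"
  define z where "z = clique_vec S"
  have T: "T \<noteq> {}" using ST by auto
  have y: "y \<in> std_simplex" and z: "z \<in> std_simplex"
    using clique_vec_in_std_simplex ST T by (auto simp: y_def z_def)
  obtain i where i: "i \<in> T" using T by auto
  have "grad y $ l = grad y $ i" if "l \<in> T" for l
  proof (cases "l = i")
    case False
    moreover have "y $ l = y $ i" "0 < y $ i" using that i by (auto simp: y_def clique_vec_nth card_gt_0_iff)
    ultimately show ?thesis using perm_invariant_gradient_eq[OF inv grad[OF y] y] by metis
  qed simp
  moreover have "(z - y) $ l = 0" if "l \<notin> T" for l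
    using that ST by (auto simp: y_def z_def clique_vec_nth)
  moreover have "(\<Sum>l\<in>UNIV. (z - y) $ l) = 0"
    using y z by (simp add: sum_subtractf std_simplex_def)
  ultimately have orth: "grad y \<bullet> (z - y) = 0" by (rule inner_eq_zero_if_const_on_support)
  obtain l where "l \<in> T" "l \<notin> S" using ST by auto
  then have "z $ l \<noteq> y $ l" by (auto simp: y_def z_def clique_vec_nth card_gt_0_iff)
  then have "z \<noteq> y" by auto
  then have "\<Phi> z < \<Phi> y + grad y \<bullet> (z - y) + 2 / 2 * ((z - y) \<bullet> (z - y))"
    using convex_std_simplex y z grad hess inner_matrix_vector_less_of_onorm_less[OF hess_bound]
    by (intro strict_second_order_upper_bound[where D = "\<lambda>x v. H x *v v"]) auto
  then show ?thesis
    using orth inner_clique_vec_diff[of S T] ST by (simp add: y_def z_def)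
qed

lemma f_obj_clique_vec_less:
  fixes \<Phi> :: "real^'n::finite \<Rightarrow> real" and grad :: "real^'n \<Rightarrow> real^'n"
    and H :: "real^'n \<Rightarrow> real^'n^'n"
  assumes graph: "simple_graph E"
    and grad: "\<And>x. x \<in> std_simplex \<Longrightarrow> (\<Phi> has_derivative (\<lambda>h. grad x \<bullet> h)) (at x)"
    and hess: "\<And>x. x \<in> std_simplex \<Longrightarrow> (grad has_derivative (\<lambda>h. H x *v h)) (at x)"
    and hess_bound: "\<And>x. x \<in> std_simplex \<Longrightarrow> onorm (\<lambda>v. H x *v v) < 2"
    and inv: "\<And>x y. x \<in> std_simplex \<Longrightarrow> y \<in> perm_set x \<Longrightarrow> \<Phi> y = \<Phi> x"
    and A: "is_clique E A" "A \<noteq> {}" and B: "is_clique E B" "B \<noteq> {}"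
    and card: "card A < card B"
  shows "f_obj (adj_matrix E) \<Phi> (clique_vec A) < f_obj (adj_matrix E) \<Phi> (clique_vec B)"
proof -
  obtain S where S: "S \<subseteq> B" "card S = card A"
    using obtain_subset_with_card_n[of "card A" B] card by auto
  then have "S \<subset> B" "S \<noteq> {}" using card A by auto
  then have "\<Phi> (clique_vec S) < \<Phi> (clique_vec B) + (1 / real (card S) - 1 / real (card B))"
    using perm_invariant_clique_vec_subset_less[of \<Phi> grad H] grad hess hess_bound inv by blast
  moreover have "\<Phi> (clique_vec A) = \<Phi> (clique_vec S)"
    using perm_invariant_clique_vec_eq[of \<Phi>, OF inv S(2)[symmetric] A(2) \<open>S \<noteq> {}\<close>] .
  ultimately show ?thesis
    using S by (simp add: f_obj_clique_vec[OF graph A] f_obj_clique_vec[OF graph B])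
qed

theorem proposition3:
  fixes E :: "'n::finite \<Rightarrow> 'n \<Rightarrow> bool"
    and \<Phi> :: "real^'n \<Rightarrow> real"
    and grad :: "real^'n \<Rightarrow> real^'n"
    and H :: "real^'n \<Rightarrow> real^'n^'n"
    and X :: "(real^'n) set"
    and C1 C2 :: "'n set"
  assumes graph: "simple_graph E"
    and X_open: "open X" and X_sup: "std_simplex \<subseteq> X"
    and grad: "\<And>x. x \<in> X \<Longrightarrow> (\<Phi> has_derivative (\<lambda>h. grad x \<bullet> h)) (at x)"
    and hess: "\<And>x. x \<in> X \<Longrightarrow> (grad has_derivative (\<lambda>h. H x *v h)) (at x)"
    and hess_cont: "continuous_on X H"
    and C1: "\<And>x v. x \<in> std_simplex \<Longrightarrow> 0 \<le> v \<bullet> (H x *v v)"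
    and C2: "\<And>x. x \<in> std_simplex \<Longrightarrow> onorm (\<lambda>v. H x *v v) < 2"
    and C3: "\<And>x y. x \<in> std_simplex \<Longrightarrow> y \<in> perm_set x \<Longrightarrow> \<Phi> y = \<Phi> x"
    and cl1: "is_clique E C1" "C1 \<noteq> {}"
    and cl2: "is_clique E C2" "C2 \<noteq> {}"
  shows "card C1 < card C2 \<longleftrightarrow>
     f_obj (adj_matrix E) \<Phi> (clique_vec C1) < f_obj (adj_matrix E) \<Phi> (clique_vec C2)"
proof -
  have grad': "\<And>x. x \<in> std_simplex \<Longrightarrow> (\<Phi> has_derivative (\<lambda>h. grad x \<bullet> h)) (at x)"
    and hess': "\<And>x. x \<in> std_simplex \<Longrightarrow> (grad has_derivative (\<lambda>h. H x *v h)) (at x)"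
    using grad hess X_sup by auto
  have less: "card A < card B \<Longrightarrow> f_obj (adj_matrix E) \<Phi> (clique_vec A) < f_obj (adj_matrix E) \<Phi> (clique_vec B)"
    if "is_clique E A" "A \<noteq> {}" "is_clique E B" "B \<noteq> {}" for A B
    using f_obj_clique_vec_less[of E \<Phi> grad H] graph grad' hess' C2 C3 that by blast
  have "f_obj (adj_matrix E) \<Phi> (clique_vec C1) = f_obj (adj_matrix E) \<Phi> (clique_vec C2)"
    if "card C1 = card C2"
    using perm_invariant_clique_vec_eq[of \<Phi>, OF C3 that cl1(2) cl2(2)]
    by (simp add: f_obj_clique_vec[OF graph cl1] f_obj_clique_vec[OF graph cl2] that)
  then show ?thesis
    using less[OF cl1 cl2] less[OF cl2 cl1] by (cases "card C1" "card C2" rule: linorder_cases) auto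
qed

end
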